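(* Let $W$ be a standard one-dimensional Brownian motion, let $T>0$, and let $f:\mathbb{R}\to\mathbb{R}$ be bounded. For $\varepsilon>0$ let $Q_\varepsilon(t)=[f(\varepsilon W),\varepsilon W](t)$, $t\in[0,T]$. Suppose that ${\rm osc}_f(\delta)\le C_f\delta$ for some constant $C_f>0$ and all sufficiently small $\delta>0$. Then for every $\delta>0$, $\gamma\in(0,1)$ and $\mu\in(\gamma,1)$ there are constants $\varepsilon_{\delta,\mu}>0$ and $C_{\delta,\mu}>0$ such that \[ \mathsf{P}\Big\{\varepsilon^{-(1+\gamma)}\sup_{t\le T}|Q_\varepsilon(t)|>\delta\Big\}\le C_{\delta,\mu}\,e^{-\varepsilon^{-(1-\mu)}},\qquad \varepsilon\in(0,\varepsilon_{\delta,\mu}). \]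
   Context: The modulus of continuity of $f$ is ${\rm osc}_f(\delta)=\sup_{|t-s|<\delta}|f(s)-f(t)|$ for $\delta>0$. The quadratic covariation $[X,Y](t)$ of two processes is the limit in probability, as the mesh of partitions $0=u_0<\dots<u_m=t$ tends to $0$, of $\sum_{k}(X(u_{k+1})-X(u_k))(Y(u_{k+1})-Y(u_k))$. *)

theory Defs
  imports "HOL-Probability.Probability"
begin

definition std_brownian_motion :: "'a measure \<Rightarrow> (real \<Rightarrow> 'a \<Rightarrow> real) \<Rightarrow> bool" where
  "std_brownian_motion M W \<longleftrightarrow>
     prob_space M \<and>
     (\<forall>t. W t \<in> borel_measurable M) \<and>
     (\<forall>\<omega>\<in>space M. W 0 \<omega> = 0 \<and> continuous_on {0..} (\<lambda>t. W t \<omega>)) \<and>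
     (\<forall>s t. 0 \<le> s \<and> s < t \<longrightarrow>
        distributed M lborel (\<lambda>\<omega>. W t \<omega> - W s \<omega>) (\<lambda>x. ennreal (normal_density 0 (sqrt (t - s)) x))) \<and>
     (\<forall>(u :: nat \<Rightarrow> real) n. 0 \<le> u 0 \<and> (\<forall>k<n. u k < u (Suc k)) \<longrightarrow>
        prob_space.indep_vars M (\<lambda>_. borel) (\<lambda>k \<omega>. W (u (Suc k)) \<omega> - W (u k) \<omega>) {..<n})"

definition osc :: "(real \<Rightarrow> real) \<Rightarrow> real \<Rightarrow> real" where
  "osc f \<delta> = (SUP st \<in> {(s, t). \<bar>t - s\<bar> < \<delta>}. \<bar>f (fst st) - f (snd st)\<bar>)"

definition is_partition :: "(nat \<Rightarrow> real) \<Rightarrow> nat \<Rightarrow> real \<Rightarrow> bool" where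
  "is_partition u m t \<longleftrightarrow> u 0 = 0 \<and> u m = t \<and> (\<forall>k<m. u k < u (Suc k))"

definition cov_sum :: "(real \<Rightarrow> 'a \<Rightarrow> real) \<Rightarrow> (real \<Rightarrow> 'a \<Rightarrow> real) \<Rightarrow> (nat \<Rightarrow> real) \<Rightarrow> nat \<Rightarrow> 'a \<Rightarrow> real" where
  "cov_sum X Y u m \<omega> = (\<Sum>k<m. (X (u (Suc k)) \<omega> - X (u k) \<omega>) * (Y (u (Suc k)) \<omega> - Y (u k) \<omega>))"

text \<open>L is (a version of) the quadratic covariation [X,Y](t): the limit in probability
  of the partition sums as the mesh of the partition of [0,t] tends to 0.\<close>
definition is_quad_covariation :: "'a measure \<Rightarrow> (real \<Rightarrow> 'a \<Rightarrow> real) \<Rightarrow> (real \<Rightarrow> 'a \<Rightarrow> real) \<Rightarrow> real \<Rightarrow> ('a \<Rightarrow> real) \<Rightarrow> bool" where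
  "is_quad_covariation M X Y t L \<longleftrightarrow>
     L \<in> borel_measurable M \<and>
     (\<forall>\<eta>>0. \<forall>r>0. \<exists>d>0. \<forall>u m. is_partition u m t \<and> (\<forall>k<m. u (Suc k) - u k < d) \<longrightarrow>
        measure M {\<omega>\<in>space M. \<bar>cov_sum X Y u m \<omega> - L \<omega>\<bar> > \<eta>} < r)"

end

theory Submission
  imports Defs "HOL-Real_Asymp.Real_Asymp"
begin

text \<open>
  The bound holds in the strongest possible form: for small \<open>\<epsilon>\<close> the event has probability zero.
  A bounded \<open>f\<close> whose modulus of continuity is linear near \<open>0\<close> is globally Lipschitz, say with
  constant \<open>L\<close>, so every partition sum of \<open>[f(\<epsilon>W), \<epsilon>W]\<close> is at most \<open>L \<epsilon>\<^sup>2\<close> times the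
  quadratic-variation sum of \<open>W\<close>. On uniform partitions the latter concentrates at \<open>t\<close>
  (Chebyshev, with the variance computed from the independent Gaussian increments), hence
  \<open>\<bar>Q \<epsilon> t\<bar> \<le> L \<epsilon>\<^sup>2 t\<close> almost surely for each \<open>t\<close>, and by continuity of the paths simultaneously
  for all \<open>t \<le> T\<close>. Therefore \<open>\<epsilon> powr -(1 + \<gamma>) * sup \<bar>Q \<epsilon>\<bar> \<le> L T \<epsilon> powr (1 - \<gamma>)\<close>, which is
  below \<open>\<delta>\<close> for small \<open>\<epsilon>\<close>.
\<close>

lemma distributed_normal_moments:
  fixes X :: "'a \<Rightarrow> real"
  assumes D: "distributed M lborel X (\<lambda>x. ennreal (normal_density 0 \<sigma> x))" and \<sigma>: "\<sigma> > 0"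
  shows "integrable M (\<lambda>\<omega>. X \<omega> ^ 2)" "integrable M (\<lambda>\<omega>. X \<omega> ^ 4)"
    "(\<integral>\<omega>. X \<omega> ^ 2 \<partial>M) = \<sigma>^2" "(\<integral>\<omega>. X \<omega> ^ 4 \<partial>M) = 3 * \<sigma>^4"
proof -
  have moment: "integrable lborel (\<lambda>x. normal_density 0 \<sigma> x * x ^ k)" for k
    using integrable_normal_moment[of \<sigma> 0 k] \<sigma> by simp
  show "integrable M (\<lambda>\<omega>. X \<omega> ^ 2)" "integrable M (\<lambda>\<omega>. X \<omega> ^ 4)"
    using distributed_integrable[OF D] moment by auto
  show "(\<integral>\<omega>. X \<omega> ^ 2 \<partial>M) = \<sigma>^2"
    using distributed_integral[OF D, of "\<lambda>x. x^2"] integral_normal_moment_even[of \<sigma> 0 1] \<sigma>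
    by (simp add: fact_numeral)
  show "(\<integral>\<omega>. X \<omega> ^ 4 \<partial>M) = 3 * \<sigma>^4"
    using distributed_integral[OF D, of "\<lambda>x. x^4"] integral_normal_moment_even[of \<sigma> 0 2] \<sigma>
    by (simp add: fact_numeral power2_eq_square power4_eq_xxxx field_simps)
qed

lemma (in prob_space) distributed_normal_centered_square:
  fixes X :: "'a \<Rightarrow> real"
  assumes D: "distributed M lborel X (\<lambda>x. ennreal (normal_density 0 \<sigma> x))" and "\<sigma> > 0"
  shows "integrable M (\<lambda>\<omega>. (X \<omega> ^ 2 - \<sigma>\<^sup>2)\<^sup>2)" "expectation (\<lambda>\<omega>. X \<omega> ^ 2 - \<sigma>\<^sup>2) = 0"
    "expectation (\<lambda>\<omega>. (X \<omega> ^ 2 - \<sigma>\<^sup>2)\<^sup>2) = 2 * \<sigma>^4"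
proof -
  note moments = distributed_normal_moments[OF D \<open>\<sigma> > 0\<close>]
  have square: "(X \<omega> ^ 2 - \<sigma>\<^sup>2)\<^sup>2 = X \<omega> ^ 4 - 2 * \<sigma>\<^sup>2 * X \<omega> ^ 2 + \<sigma>^4" for \<omega>
    by (simp add: power2_eq_square power4_eq_xxxx algebra_simps)
  show "integrable M (\<lambda>\<omega>. (X \<omega> ^ 2 - \<sigma>\<^sup>2)\<^sup>2)" "expectation (\<lambda>\<omega>. (X \<omega> ^ 2 - \<sigma>\<^sup>2)\<^sup>2) = 2 * \<sigma>^4"
    using moments unfolding square by (simp_all add: prob_space power2_eq_square power4_eq_xxxx)
  show "expectation (\<lambda>\<omega>. X \<omega> ^ 2 - \<sigma>\<^sup>2) = 0"
    using moments by (simp add: prob_space)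
qed

lemma (in prob_space) expectation_square_sum_indep:
  fixes Y :: "'i \<Rightarrow> 'a \<Rightarrow> real"
  assumes "finite I" and indep: "indep_vars (\<lambda>_. borel) Y I"
    and sq: "\<And>i. i \<in> I \<Longrightarrow> integrable M (\<lambda>\<omega>. Y i \<omega> ^ 2)"
    and centered: "\<And>i. i \<in> I \<Longrightarrow> expectation (Y i) = 0"
  shows "integrable M (\<lambda>\<omega>. (\<Sum>i\<in>I. Y i \<omega>) ^ 2)"
    "expectation (\<lambda>\<omega>. (\<Sum>i\<in>I. Y i \<omega>) ^ 2) = (\<Sum>i\<in>I. expectation (\<lambda>\<omega>. Y i \<omega> ^ 2))"
proof -
  have [measurable]: "Y i \<in> borel_measurable M" if "i \<in> I" for i
    using indep that by (auto simp: indep_vars_def)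
  have int: "integrable M (Y i)" if "i \<in> I" for i
    using that sq by (auto intro: square_integrable_imp_integrable)
  have pair: "integrable M (\<lambda>\<omega>. Y i \<omega> * Y j \<omega>) \<and>
      expectation (\<lambda>\<omega>. Y i \<omega> * Y j \<omega>) = (if i = j then expectation (\<lambda>\<omega>. Y i \<omega> ^ 2) else 0)"
    if "i \<in> I" "j \<in> I" for i j
  proof (cases "i = j")
    case True
    then show ?thesis using sq[OF \<open>i \<in> I\<close>] by (simp add: power2_eq_square)
  next
    case False
    have "indep_vars (\<lambda>_. borel) Y {i, j}"
      using indep_vars_subset[OF indep] that by auto
    then have "integrable M (\<lambda>\<omega>. \<Prod>k\<in>{i,j}. Y k \<omega>)"
      "expectation (\<lambda>\<omega>. \<Prod>k\<in>{i,j}. Y k \<omega>) = (\<Prod>k\<in>{i,j}. expectation (Y k))"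
      using that int by (auto intro!: indep_vars_integrable indep_vars_lebesgue_integral)
    then show ?thesis using False centered that by simp
  qed
  have square: "(\<Sum>i\<in>I. Y i \<omega>) ^ 2 = (\<Sum>i\<in>I. \<Sum>j\<in>I. Y i \<omega> * Y j \<omega>)" for \<omega>
    by (simp add: power2_eq_square sum_product)
  show "integrable M (\<lambda>\<omega>. (\<Sum>i\<in>I. Y i \<omega>) ^ 2)"
    unfolding square using pair by auto
  show "expectation (\<lambda>\<omega>. (\<Sum>i\<in>I. Y i \<omega>) ^ 2) = (\<Sum>i\<in>I. expectation (\<lambda>\<omega>. Y i \<omega> ^ 2))"
  proof -
    have "expectation (\<lambda>\<omega>. (\<Sum>i\<in>I. Y i \<omega>) ^ 2) = (\<Sum>i\<in>I. \<Sum>j\<in>I. expectation (\<lambda>\<omega>. Y i \<omega> * Y j \<omega>))"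
      unfolding square using pair
      by (simp add: Bochner_Integration.integral_sum)
    also have "\<dots> = (\<Sum>i\<in>I. \<Sum>j\<in>I. if i = j then expectation (\<lambda>\<omega>. Y i \<omega> ^ 2) else 0)"
      using pair by (intro sum.cong) auto
    finally show ?thesis using \<open>finite I\<close> by simp
  qed
qed

lemma std_brownian_motion_prob_space: "std_brownian_motion M W \<Longrightarrow> prob_space M"
  by (simp add: std_brownian_motion_def)

lemma std_brownian_motion_measurable: "std_brownian_motion M W \<Longrightarrow> W t \<in> borel_measurable M"
  by (simp add: std_brownian_motion_def)

lemma std_brownian_motion_increment:
  "std_brownian_motion M W \<Longrightarrow> 0 \<le> s \<Longrightarrow> s < t \<Longrightarrow>
    distributed M lborel (\<lambda>\<omega>. W t \<omega> - W s \<omega>) (\<lambda>x. ennreal (normal_density 0 (sqrt (t - s)) x))"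
  by (simp add: std_brownian_motion_def)

lemma std_brownian_motion_indep_increments:
  "std_brownian_motion M W \<Longrightarrow> 0 \<le> u 0 \<Longrightarrow> (\<And>k. k < n \<Longrightarrow> u k < u (Suc k)) \<Longrightarrow>
    prob_space.indep_vars M (\<lambda>_. borel) (\<lambda>k \<omega>. W (u (Suc k)) \<omega> - W (u k) \<omega>) {..<n}"
  by (simp add: std_brownian_motion_def)

lemma brownian_quadratic_variation_deviation:
  fixes W :: "real \<Rightarrow> 'a \<Rightarrow> real" and t a :: real and n :: nat
  assumes BM: "std_brownian_motion M W" and "t > 0" and "n > 0" and "a > 0"
  shows "measure M {\<omega>\<in>space M. a \<le> \<bar>(\<Sum>k<n. (W (t * Suc k / n) \<omega> - W (t * k / n) \<omega>)\<^sup>2) - t\<bar>}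
     \<le> 2 * t\<^sup>2 / (n * a\<^sup>2)"
proof -
  interpret prob_space M using std_brownian_motion_prob_space[OF BM] .
  note [measurable] = std_brownian_motion_measurable[OF BM]
  define h where "h = t / n"
  define u :: "nat \<Rightarrow> real" where "u k = t * k / n" for k
  define X where "X k \<omega> = W (u (Suc k)) \<omega> - W (u k) \<omega>" for k \<omega>
  define Y where "Y k \<omega> = X k \<omega> ^ 2 - h" for k \<omega>
  have "h > 0" and step: "u (Suc k) - u k = h" and "0 \<le> u k" for k
    using \<open>t > 0\<close> \<open>n > 0\<close> by (simp_all add: h_def u_def field_simps)
  have u_less: "u k < u (Suc k)" for k
    using step[of k] \<open>h > 0\<close> by simp
  have "distributed M lborel (X k) (\<lambda>x. ennreal (normal_density 0 (sqrt h) x))" for k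
    using std_brownian_motion_increment[OF BM \<open>0 \<le> u k\<close> u_less] by (simp add: X_def[abs_def] step)
  note moments = distributed_normal_centered_square[OF this real_sqrt_gt_zero[OF \<open>h > 0\<close>]]
  have "(sqrt h)\<^sup>2 = h" "sqrt h ^ 4 = h\<^sup>2"
    using \<open>h > 0\<close> by (simp_all add: power4_eq_xxxx power2_eq_square)
  then have Y_moments: "integrable M (\<lambda>\<omega>. Y k \<omega> ^ 2)" "expectation (Y k) = 0"
    "expectation (\<lambda>\<omega>. Y k \<omega> ^ 2) = 2 * h\<^sup>2" for k
    using moments[of k] by (simp_all add: Y_def[abs_def])
  have "indep_vars (\<lambda>_. borel) X {..<n}"
    using std_brownian_motion_indep_increments[OF BM \<open>0 \<le> u 0\<close> u_less] by (simp add: X_def[abs_def])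
  then have "indep_vars (\<lambda>_. borel) (\<lambda>k \<omega>. (\<lambda>x. x\<^sup>2 - h) (X k \<omega>)) {..<n}"
    by (rule indep_vars_compose2) auto
  then have "indep_vars (\<lambda>_. borel) Y {..<n}"
    by (simp add: Y_def[abs_def])
  note sum_moments = expectation_square_sum_indep[OF _ this Y_moments(1,2), simplified]
  define F where "F \<omega> = (\<Sum>k<n. Y k \<omega>)" for \<omega>
  have F_eq: "F \<omega> = (\<Sum>k<n. (W (t * Suc k / n) \<omega> - W (t * k / n) \<omega>)\<^sup>2) - t" for \<omega>
    using \<open>n > 0\<close> by (simp add: F_def Y_def X_def u_def h_def sum_subtractf)
  have "F \<in> borel_measurable M"
    unfolding F_def Y_def X_def by measurable
  moreover have "integrable M (\<lambda>\<omega>. F \<omega> ^ 2)"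
    using sum_moments(1) by (simp add: F_def)
  ultimately have "measure M {\<omega>\<in>space M. \<bar>F \<omega>\<bar> \<ge> a} \<le> expectation (\<lambda>\<omega>. F \<omega> ^ 2) / a\<^sup>2"
    using \<open>a > 0\<close> by (rule second_moment_method)
  also have "expectation (\<lambda>\<omega>. F \<omega> ^ 2) = 2 * t\<^sup>2 / n"
    using sum_moments(2) Y_moments(3) \<open>n > 0\<close> by (simp add: F_def h_def power2_eq_square)
  finally show ?thesis
    using \<open>n > 0\<close> by (simp add: F_eq field_simps)
qed

lemma abs_diff_le_osc:
  assumes "bounded (range f)" and "\<bar>a - b\<bar> < w"
  shows "\<bar>f a - f b\<bar> \<le> osc f w"
proof -
  obtain B where B: "\<And>x. \<bar>f x\<bar> \<le> B"
    using assms(1) by (auto simp: bounded_iff)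
  have "bdd_above ((\<lambda>st. \<bar>f (fst st) - f (snd st)\<bar>) ` {(s, t). \<bar>t - s\<bar> < w})"
  proof (rule bdd_aboveI2)
    fix st :: "real \<times> real"
    show "\<bar>f (fst st) - f (snd st)\<bar> \<le> 2 * B"
      using B[of "fst st"] B[of "snd st"] by linarith
  qed
  then show ?thesis
    unfolding osc_def using assms(2) by (intro cSUP_upper2[of _ _ "(a, b)"]) auto
qed

lemma Lipschitz_if_bounded_osc_linear:
  fixes f :: "real \<Rightarrow> real"
  assumes bdd: "bounded (range f)" and "C > 0" and "\<delta>0 > 0"
    and osc: "\<And>\<delta>. 0 < \<delta> \<Longrightarrow> \<delta> < \<delta>0 \<Longrightarrow> osc f \<delta> \<le> C * \<delta>"
  shows "\<exists>L>0. \<forall>a b. \<bar>f a - f b\<bar> \<le> L * \<bar>a - b\<bar>"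
proof -
  obtain B where B: "\<And>x. \<bar>f x\<bar> \<le> B"
    using bdd by (auto simp: bounded_iff)
  define L where "L = max C (2 * B / \<delta>0)"
  have "\<bar>f a - f b\<bar> \<le> L * \<bar>a - b\<bar>" for a b
  proof (cases "\<bar>a - b\<bar> < \<delta>0")
    case True
    have "\<bar>f a - f b\<bar> / C \<le> \<bar>a - b\<bar>"
    proof (rule dense_ge_bounded[OF True])
      fix w assume "\<bar>a - b\<bar> < w" "w < \<delta>0"
      moreover from this have "0 < w"
        by linarith
      ultimately have "\<bar>f a - f b\<bar> \<le> C * w"
        using abs_diff_le_osc[OF bdd, of a b w] osc[of w] by linarith
      then show "\<bar>f a - f b\<bar> / C \<le> w"
        using \<open>C > 0\<close> by (simp add: field_simps)
    qed
    then have "\<bar>f a - f b\<bar> \<le> C * \<bar>a - b\<bar>"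
      using \<open>C > 0\<close> by (simp add: field_simps)
    also have "\<dots> \<le> L * \<bar>a - b\<bar>"
      by (intro mult_right_mono) (auto simp: L_def)
    finally show ?thesis .
  next
    case False
    have "\<bar>f a - f b\<bar> \<le> 2 * B"
      using B[of a] B[of b] by linarith
    also have "\<dots> \<le> (2 * B / \<delta>0) * \<bar>a - b\<bar>"
      using False B[of a] \<open>\<delta>0 > 0\<close> by (simp add: field_simps mult_left_mono)
    also have "\<dots> \<le> L * \<bar>a - b\<bar>"
      by (intro mult_right_mono) (auto simp: L_def)
    finally show ?thesis .
  qed
  moreover have "L > 0"
    using \<open>C > 0\<close> by (simp add: L_def)
  ultimately show ?thesis by blast
qed

lemma abs_cov_sum_le_Lipschitz:
  assumes Lip: "\<And>x y. \<bar>g x - g y\<bar> \<le> L * \<bar>x - y\<bar>"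
  shows "\<bar>cov_sum (\<lambda>s \<omega>. g (c * X s \<omega>)) (\<lambda>s \<omega>. c * X s \<omega>) u m \<omega>\<bar>
    \<le> L * c\<^sup>2 * (\<Sum>k<m. (X (u (Suc k)) \<omega> - X (u k) \<omega>)\<^sup>2)"
proof -
  have "\<bar>(g (c * y) - g (c * x)) * (c * y - c * x)\<bar> \<le> L * c\<^sup>2 * (y - x)\<^sup>2" for x y
  proof -
    have "\<bar>(g (c * y) - g (c * x)) * (c * y - c * x)\<bar> \<le> (L * \<bar>c * y - c * x\<bar>) * \<bar>c * y - c * x\<bar>"
      unfolding abs_mult by (intro mult_right_mono Lip) auto
    also have "\<dots> = L * c\<^sup>2 * (y - x)\<^sup>2"
      by (simp add: power2_eq_square algebra_simps)
    finally show ?thesis .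
  qed
  then show ?thesis
    unfolding cov_sum_def sum_distrib_left
    by (intro order.trans[OF sum_abs] sum_mono) auto
qed

lemma (in finite_measure) AE_le_if_tail_measures_small:
  fixes Z :: "'a \<Rightarrow> real"
  assumes [measurable]: "Z \<in> borel_measurable M"
    and small: "\<And>\<eta> r. \<eta> > 0 \<Longrightarrow> r > 0 \<Longrightarrow> measure M {\<omega>\<in>space M. b + \<eta> < Z \<omega>} \<le> r"
  shows "AE \<omega> in M. Z \<omega> \<le> b"
proof -
  have "AE \<omega> in M. Z \<omega> \<le> b + \<eta>" if "\<eta> > 0" for \<eta>
  proof -
    have "measure M {\<omega>\<in>space M. b + \<eta> < Z \<omega>} \<le> 0"
      using small[OF that] by (rule field_le_epsilon) simp
    then have "emeasure M {\<omega>\<in>space M. b + \<eta> < Z \<omega>} = 0"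
      by (simp add: emeasure_eq_measure measure_le_0_iff)
    moreover have "{\<omega>\<in>space M. b + \<eta> < Z \<omega>} \<in> sets M"
      by measurable
    ultimately show ?thesis
      by (simp add: AE_iff_measurable[OF _ refl] not_le)
  qed
  then have "AE \<omega> in M. \<forall>n. Z \<omega> \<le> b + inverse (Suc n)"
    by (simp add: AE_all_countable)
  then show ?thesis
  proof eventually_elim
    case (elim \<omega>)
    show ?case
    proof (rule field_le_epsilon)
      fix e :: real assume "e > 0"
      then obtain n where "inverse (Suc n) < e"
        using reals_Archimedean by blast
      then show "Z \<omega> \<le> b + e"
        using elim[rule_format, of n] by linarith
    qed
  qed
qed

lemma Lipschitz_borel_measurable:
  fixes g :: "real \<Rightarrow> real"
  assumes "\<And>x y. \<bar>g x - g y\<bar> \<le> L * \<bar>x - y\<bar>"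
  shows "g \<in> borel_measurable borel"
  using assms assms[of 1 0]
  by (intro borel_measurable_continuous_onI lipschitz_on_continuous_on[of L])
    (auto simp: lipschitz_on_def dist_real_def)

lemma quad_covariation_tail_le_partition:
  fixes W :: "real \<Rightarrow> 'a \<Rightarrow> real" and g :: "real \<Rightarrow> real"
  assumes BM: "std_brownian_motion M W"
    and Lip: "\<And>x y. \<bar>g x - g y\<bar> \<le> L * \<bar>x - y\<bar>"
    and [measurable]: "Z \<in> borel_measurable M" and "L * c\<^sup>2 * a \<le> \<eta>"
  shows "measure M {\<omega>\<in>space M. L * c\<^sup>2 * t + 2 * \<eta> < \<bar>Z \<omega>\<bar>}
    \<le> measure M {\<omega>\<in>space M. \<eta> < \<bar>cov_sum (\<lambda>s \<omega>. g (c * W s \<omega>)) (\<lambda>s \<omega>. c * W s \<omega>) u m \<omega> - Z \<omega>\<bar>}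
      + measure M {\<omega>\<in>space M. a \<le> \<bar>(\<Sum>k<m. (W (u (Suc k)) \<omega> - W (u k) \<omega>)\<^sup>2) - t\<bar>}"
    (is "measure M ?A \<le> measure M ?B1 + measure M ?B2")
proof -
  interpret prob_space M using std_brownian_motion_prob_space[OF BM] .
  note [measurable] = std_brownian_motion_measurable[OF BM] Lipschitz_borel_measurable[OF Lip]
  define K where "K = L * c\<^sup>2"
  have "K \<ge> 0"
    using Lip[of 1 0] by (simp add: K_def)
  have "?A \<subseteq> ?B1 \<union> ?B2"
  proof
    fix \<omega> assume \<omega>: "\<omega> \<in> ?A"
    define S where "S = (\<Sum>k<m. (W (u (Suc k)) \<omega> - W (u k) \<omega>)\<^sup>2)"
    have "\<bar>cov_sum (\<lambda>s \<omega>. g (c * W s \<omega>)) (\<lambda>s \<omega>. c * W s \<omega>) u m \<omega>\<bar> \<le> K * S"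
      unfolding K_def S_def by (rule abs_cov_sum_le_Lipschitz[OF Lip])
    moreover have "K * S \<le> K * t + \<eta>" if "\<bar>S - t\<bar> < a"
    proof -
      have "K * S \<le> K * (t + a)"
        using that \<open>K \<ge> 0\<close> by (intro mult_left_mono) auto
      then show ?thesis
        using \<open>L * c\<^sup>2 * a \<le> \<eta>\<close> by (simp add: K_def distrib_left)
    qed
    ultimately show "\<omega> \<in> ?B1 \<union> ?B2"
      using \<omega> by (auto simp: K_def S_def not_le)
  qed
  moreover have "?B1 \<in> sets M" "?B2 \<in> sets M"
    unfolding cov_sum_def by measurable
  ultimately have "measure M ?A \<le> measure M (?B1 \<union> ?B2)"
    by (intro finite_measure_mono) auto
  also have "\<dots> \<le> measure M ?B1 + measure M ?B2"
    using \<open>?B1 \<in> sets M\<close> \<open>?B2 \<in> sets M\<close> by (intro measure_subadditive) auto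
  finally show ?thesis .
qed

lemma quad_covariation_tail_le:
  fixes W :: "real \<Rightarrow> 'a \<Rightarrow> real" and g :: "real \<Rightarrow> real"
  assumes BM: "std_brownian_motion M W" and "t > 0"
    and Lip: "\<And>x y. \<bar>g x - g y\<bar> \<le> L * \<bar>x - y\<bar>"
    and cov: "is_quad_covariation M (\<lambda>s \<omega>. g (c * W s \<omega>)) (\<lambda>s \<omega>. c * W s \<omega>) t Z"
    and "\<eta> > 0" and "r > 0"
  shows "measure M {\<omega>\<in>space M. L * c\<^sup>2 * t + 2 * \<eta> < \<bar>Z \<omega>\<bar>} \<le> 2 * r"
proof -
  define a where "a = \<eta> / (L * c\<^sup>2 + 1)"
  have "L * c\<^sup>2 \<ge> 0"
    using Lip[of 1 0] by simp
  then have "a > 0" and "L * c\<^sup>2 * a \<le> \<eta>"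
    using \<open>\<eta> > 0\<close> by (auto simp: a_def field_simps)
  obtain d where "d > 0" and fine: "\<And>u m. is_partition u m t \<Longrightarrow> (\<forall>k<m. u (Suc k) - u k < d) \<Longrightarrow>
      measure M {\<omega>\<in>space M. \<bar>cov_sum (\<lambda>s \<omega>. g (c * W s \<omega>)) (\<lambda>s \<omega>. c * W s \<omega>) u m \<omega> - Z \<omega>\<bar> > \<eta>} < r"
    using cov \<open>\<eta> > 0\<close> \<open>r > 0\<close> unfolding is_quad_covariation_def by meson
  obtain n :: nat where n: "max (t / d) (2 * t\<^sup>2 / (a\<^sup>2 * r)) < n"
    using reals_Archimedean2 by blast
  have "0 < t / d"
    using \<open>t > 0\<close> \<open>d > 0\<close> by simp
  then have "n > 0"
    using n by linarith
  define u :: "nat \<Rightarrow> real" where "u k = t * k / n" for k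
  have "is_partition u n t" and "\<forall>k<n. u (Suc k) - u k < d"
    using \<open>n > 0\<close> \<open>t > 0\<close> \<open>d > 0\<close> n by (auto simp: is_partition_def u_def field_simps)
  then have "measure M {\<omega>\<in>space M. \<eta> < \<bar>cov_sum (\<lambda>s \<omega>. g (c * W s \<omega>)) (\<lambda>s \<omega>. c * W s \<omega>) u n \<omega> - Z \<omega>\<bar>} < r"
    by (rule fine)
  moreover have "measure M {\<omega>\<in>space M. a \<le> \<bar>(\<Sum>k<n. (W (u (Suc k)) \<omega> - W (u k) \<omega>)\<^sup>2) - t\<bar>}
      \<le> 2 * t\<^sup>2 / (n * a\<^sup>2)"
    using brownian_quadratic_variation_deviation[OF BM \<open>t > 0\<close> \<open>n > 0\<close> \<open>a > 0\<close>] by (simp add: u_def)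
  moreover have "2 * t\<^sup>2 / (n * a\<^sup>2) \<le> r"
    using n \<open>n > 0\<close> \<open>a > 0\<close> \<open>r > 0\<close> by (simp add: field_simps)
  moreover have "Z \<in> borel_measurable M"
    using cov by (simp add: is_quad_covariation_def)
  ultimately show ?thesis
    using quad_covariation_tail_le_partition[OF BM Lip _ \<open>L * c\<^sup>2 * a \<le> \<eta>\<close>, of Z t u n] by linarith
qed

lemma quad_covariation_Lipschitz_AE_bound:
  fixes W :: "real \<Rightarrow> 'a \<Rightarrow> real" and g :: "real \<Rightarrow> real"
  assumes BM: "std_brownian_motion M W" and "t > 0"
    and Lip: "\<And>x y. \<bar>g x - g y\<bar> \<le> L * \<bar>x - y\<bar>"
    and cov: "is_quad_covariation M (\<lambda>s \<omega>. g (c * W s \<omega>)) (\<lambda>s \<omega>. c * W s \<omega>) t Z"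
  shows "AE \<omega> in M. \<bar>Z \<omega>\<bar> \<le> L * c\<^sup>2 * t"
proof -
  interpret prob_space M using std_brownian_motion_prob_space[OF BM] .
  have "Z \<in> borel_measurable M"
    using cov by (simp add: is_quad_covariation_def)
  then have "(\<lambda>\<omega>. \<bar>Z \<omega>\<bar>) \<in> borel_measurable M"
    by measurable
  then show ?thesis
  proof (rule AE_le_if_tail_measures_small)
    fix \<eta> r :: real assume "\<eta> > 0" "r > 0"
    then show "measure M {\<omega>\<in>space M. L * c\<^sup>2 * t + \<eta> < \<bar>Z \<omega>\<bar>} \<le> r"
      using quad_covariation_tail_le[OF BM \<open>t > 0\<close> Lip cov, of "\<eta> / 2" "r / 2"] by simp
  qed
qed

lemma continuous_bound_from_rationals:
  fixes h :: "real \<Rightarrow> real"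
  assumes "a < b" and "continuous_on {a..b} h" and "\<And>q. q \<in> \<rat> \<inter> {a<..b} \<Longrightarrow> \<bar>h q\<bar> \<le> B"
    and "t \<in> {a..b}"
  shows "\<bar>h t\<bar> \<le> B"
proof -
  have closure: "closure ({a<..b} \<inter> \<rat>) = {a..b}"
    using \<open>a < b\<close> Rats_closure_real
    by (subst closure_convex_Int_superset) auto
  show ?thesis
    by (rule continuous_le_on_closure[where S = "{a<..b} \<inter> \<rat>"])
       (use assms closure in \<open>auto intro: continuous_on_rabs\<close>)
qed

lemma AE_bound_continuous_paths:
  fixes Y :: "real \<Rightarrow> 'a \<Rightarrow> real"
  assumes "a < b" and cont: "\<And>\<omega>. \<omega> \<in> space M \<Longrightarrow> continuous_on {a..b} (\<lambda>t. Y t \<omega>)"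
    and "\<And>t. t \<in> {a<..b} \<Longrightarrow> AE \<omega> in M. \<bar>Y t \<omega>\<bar> \<le> B"
  shows "AE \<omega> in M. \<forall>t\<in>{a..b}. \<bar>Y t \<omega>\<bar> \<le> B"
proof -
  have "AE \<omega> in M. \<forall>q\<in>\<rat> \<inter> {a<..b}. \<bar>Y q \<omega>\<bar> \<le> B"
    using assms(3) by (subst AE_ball_countable) (auto intro: countable_subset[OF _ countable_rat])
  then show ?thesis
    using AE_space
  proof eventually_elim
    case (elim \<omega>)
    then show ?case
      using continuous_bound_from_rationals[OF \<open>a < b\<close> cont] by blast
  qed
qed

lemma measure_zero_if_AE_not_in:
  assumes "AE \<omega> in M. \<omega> \<notin> S"
  shows "measure M S = 0"
proof (cases "S \<in> sets M")
  case True
  then show ?thesis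
    using assms by (simp add: AE_iff_null_sets measure_eq_0_null_sets)
qed (rule measure_notin_sets)

lemma measure_scaled_sup_gt_eq_0:
  fixes Y :: "real \<Rightarrow> 'a \<Rightarrow> real"
  assumes "a \<le> b" and "AE \<omega> in M. \<forall>t\<in>{a..b}. \<bar>Y t \<omega>\<bar> \<le> B" and "0 \<le> c" and "c * B < \<delta>"
  shows "measure M {\<omega>\<in>space M. c * (SUP t\<in>{a..b}. \<bar>Y t \<omega>\<bar>) > \<delta>} = 0"
proof (rule measure_zero_if_AE_not_in)
  show "AE \<omega> in M. \<omega> \<notin> {\<omega>\<in>space M. c * (SUP t\<in>{a..b}. \<bar>Y t \<omega>\<bar>) > \<delta>}"
    using assms(2)
  proof eventually_elim
    case (elim \<omega>)
    then have "(SUP t\<in>{a..b}. \<bar>Y t \<omega>\<bar>) \<le> B"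
      using \<open>a \<le> b\<close> by (intro cSUP_least) auto
    then have "c * (SUP t\<in>{a..b}. \<bar>Y t \<omega>\<bar>) \<le> c * B"
      using \<open>0 \<le> c\<close> by (rule mult_left_mono)
    then show ?case
      using \<open>c * B < \<delta>\<close> by auto
  qed
qed

theorem theorem2:
  fixes M :: "'a measure" and W :: "real \<Rightarrow> 'a \<Rightarrow> real" and T :: real
    and f :: "real \<Rightarrow> real" and Q :: "real \<Rightarrow> real \<Rightarrow> 'a \<Rightarrow> real"
  assumes BM: "std_brownian_motion M W"
    and T: "T > 0"
    and f_bdd: "bounded (range f)"
    and f_osc: "\<exists>C>0. \<exists>\<delta>0>0. \<forall>\<delta>. 0 < \<delta> \<and> \<delta> < \<delta>0 \<longrightarrow> osc f \<delta> \<le> C * \<delta>"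
    and Q_cov: "\<And>\<epsilon> t. \<epsilon> > 0 \<Longrightarrow> t \<in> {0..T} \<Longrightarrow>
       is_quad_covariation M (\<lambda>s \<omega>. f (\<epsilon> * W s \<omega>)) (\<lambda>s \<omega>. \<epsilon> * W s \<omega>) t (Q \<epsilon> t)"
    and Q_cont: "\<And>\<epsilon> \<omega>. \<epsilon> > 0 \<Longrightarrow> \<omega> \<in> space M \<Longrightarrow> continuous_on {0..T} (\<lambda>t. Q \<epsilon> t \<omega>)"
  shows "\<forall>\<delta>>0. \<forall>\<gamma>\<in>{0<..<1}. \<forall>\<mu>\<in>{\<gamma><..<1}. \<exists>\<epsilon>0>0. \<exists>C>0. \<forall>\<epsilon>. 0 < \<epsilon> \<and> \<epsilon> < \<epsilon>0 \<longrightarrow>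
     measure M {\<omega>\<in>space M. \<epsilon> powr (-(1 + \<gamma>)) * (SUP t\<in>{0..T}. \<bar>Q \<epsilon> t \<omega>\<bar>) > \<delta>}
       \<le> C * exp (- (\<epsilon> powr (-(1 - \<mu>))))"
proof (intro allI impI ballI)
  fix \<delta> \<gamma> \<mu> :: real
  assume "\<delta> > 0" and "\<gamma> \<in> {0<..<1}" and "\<mu> \<in> {\<gamma><..<1}"
  obtain L where Lip: "\<And>a b. \<bar>f a - f b\<bar> \<le> L * \<bar>a - b\<bar>"
    using f_osc Lipschitz_if_bounded_osc_linear[OF f_bdd] by blast
  have "((\<lambda>\<epsilon>. \<epsilon> powr (-(1 + \<gamma>)) * (L * \<epsilon>\<^sup>2 * T)) \<longlongrightarrow> 0) (at_right 0)"
    using \<open>\<gamma> \<in> {0<..<1}\<close> by real_asymp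
  then obtain \<epsilon>0 where "\<epsilon>0 > 0"
    and small: "\<And>\<epsilon>. 0 < \<epsilon> \<Longrightarrow> \<epsilon> < \<epsilon>0 \<Longrightarrow> \<epsilon> powr (-(1 + \<gamma>)) * (L * \<epsilon>\<^sup>2 * T) < \<delta>"
    using \<open>\<delta> > 0\<close> by (auto simp: eventually_at_right_field dest!: order_tendstoD(2))
  have "measure M {\<omega>\<in>space M. \<epsilon> powr (-(1 + \<gamma>)) * (SUP t\<in>{0..T}. \<bar>Q \<epsilon> t \<omega>\<bar>) > \<delta>} = 0"
    if "0 < \<epsilon>" "\<epsilon> < \<epsilon>0" for \<epsilon>
  proof (rule measure_scaled_sup_gt_eq_0)
    show "AE \<omega> in M. \<forall>t\<in>{0..T}. \<bar>Q \<epsilon> t \<omega>\<bar> \<le> L * \<epsilon>\<^sup>2 * T"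
    proof (rule AE_bound_continuous_paths[OF T Q_cont[OF \<open>0 < \<epsilon>\<close>]])
      fix t assume "t \<in> {0<..T}"
      then have "AE \<omega> in M. \<bar>Q \<epsilon> t \<omega>\<bar> \<le> L * \<epsilon>\<^sup>2 * t"
        using \<open>0 < \<epsilon>\<close> by (intro quad_covariation_Lipschitz_AE_bound[OF BM _ Lip Q_cov]) auto
      moreover have "L * \<epsilon>\<^sup>2 * t \<le> L * \<epsilon>\<^sup>2 * T"
        using \<open>t \<in> {0<..T}\<close> Lip[of 1 0] by (intro mult_left_mono) auto
      ultimately show "AE \<omega> in M. \<bar>Q \<epsilon> t \<omega>\<bar> \<le> L * \<epsilon>\<^sup>2 * T"
        by (auto elim: eventually_mono)
    qed
  qed (use T small[OF that] in auto)
  then show "\<exists>\<epsilon>0>0. \<exists>C>0. \<forall>\<epsilon>. 0 < \<epsilon> \<and> \<epsilon> < \<epsilon>0 \<longrightarrow>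
     measure M {\<omega>\<in>space M. \<epsilon> powr (-(1 + \<gamma>)) * (SUP t\<in>{0..T}. \<bar>Q \<epsilon> t \<omega>\<bar>) > \<delta>}
       \<le> C * exp (- (\<epsilon> powr (-(1 - \<mu>))))"
    using \<open>\<epsilon>0 > 0\<close> by (intro exI[of _ \<epsilon>0] conjI exI[of _ 1]) auto
qed

end
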